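(* Let $p_1,\dots,p_r$ be pairwise distinct prime numbers, $\alpha_1,\dots,\alpha_r$ positive integers, and $k_i=p_i^{\alpha_i}$. Then the ring $A=\mathbb{Z}_{k_1}\times\mathbb{Z}_{k_2}\times\cdots\times\mathbb{Z}_{k_r}$ (direct product with componentwise operations) is a BL-ring.
   Context: For a commutative unitary ring $R$, its ideals $Id(R)$ form a residuated lattice $(Id(R),\cap,+,\otimes,\rightarrow,\{0\},R)$, ordered by inclusion, where $I+J$ is the ideal sum, $I\otimes J$ the ideal product, and $I\rightarrow J=(J:I)=\{x\in R: xI\subseteq J\}$. A BL-algebra is a residuated lattice satisfying prelinearity $(x\rightarrow y)\vee(y\rightarrow x)=1$ and divisibility $x\odot(x\rightarrow y)=x\wedge y$. A BL-ring is a commutative unitary ring whose lattice of ideals, with this structure, is a BL-algebra. *)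

theory Defs
  imports "HOL-Algebra.Chinese_Remainder" "HOL-Algebra.Ideal_Product" "HOL-Number_Theory.Residues"
begin

text \<open>A residuated lattice (L, mt, jn, ml, rs, bt, tp): a bounded lattice
  (order given by x \<le> y iff mt x y = x, bt least, tp greatest), a commutative monoid
  (L, ml, tp), and the residuation law  ml x y \<le> z  iff  x \<le> rs y z.\<close>

definition residuated_lattice ::
  "'a set \<Rightarrow> ('a \<Rightarrow> 'a \<Rightarrow> 'a) \<Rightarrow> ('a \<Rightarrow> 'a \<Rightarrow> 'a) \<Rightarrow> ('a \<Rightarrow> 'a \<Rightarrow> 'a)
     \<Rightarrow> ('a \<Rightarrow> 'a \<Rightarrow> 'a) \<Rightarrow> 'a \<Rightarrow> 'a \<Rightarrow> bool" where
  "residuated_lattice L mt jn ml rs bt tp \<longleftrightarrow>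
     bt \<in> L \<and> tp \<in> L \<and>
     (\<forall>x\<in>L. \<forall>y\<in>L. mt x y \<in> L \<and> jn x y \<in> L \<and> ml x y \<in> L \<and> rs x y \<in> L) \<and>
     (\<forall>x\<in>L. \<forall>y\<in>L. mt x y = mt y x \<and> jn x y = jn y x) \<and>
     (\<forall>x\<in>L. \<forall>y\<in>L. \<forall>z\<in>L. mt (mt x y) z = mt x (mt y z) \<and>
                              jn (jn x y) z = jn x (jn y z)) \<and>
     (\<forall>x\<in>L. \<forall>y\<in>L. mt x (jn x y) = x \<and> jn x (mt x y) = x) \<and>
     (\<forall>x\<in>L. mt bt x = bt \<and> mt x tp = x) \<and>
     (\<forall>x\<in>L. \<forall>y\<in>L. \<forall>z\<in>L. ml (ml x y) z = ml x (ml y z)) \<and>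
     (\<forall>x\<in>L. \<forall>y\<in>L. ml x y = ml y x) \<and>
     (\<forall>x\<in>L. ml x tp = x) \<and>
     (\<forall>x\<in>L. \<forall>y\<in>L. \<forall>z\<in>L. (mt (ml x y) z = ml x y) \<longleftrightarrow> (mt x (rs y z) = x))"

definition BL_algebra ::
  "'a set \<Rightarrow> ('a \<Rightarrow> 'a \<Rightarrow> 'a) \<Rightarrow> ('a \<Rightarrow> 'a \<Rightarrow> 'a) \<Rightarrow> ('a \<Rightarrow> 'a \<Rightarrow> 'a)
     \<Rightarrow> ('a \<Rightarrow> 'a \<Rightarrow> 'a) \<Rightarrow> 'a \<Rightarrow> 'a \<Rightarrow> bool" where
  "BL_algebra L mt jn ml rs bt tp \<longleftrightarrow>
     residuated_lattice L mt jn ml rs bt tp \<and>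
     (\<forall>x\<in>L. \<forall>y\<in>L. jn (rs x y) (rs y x) = tp) \<and>
     (\<forall>x\<in>L. \<forall>y\<in>L. ml x (rs x y) = mt x y)"

definition ideal_res :: "('a, 'b) ring_scheme \<Rightarrow> 'a set \<Rightarrow> 'a set \<Rightarrow> 'a set" where
  "ideal_res R I J = {x \<in> carrier R. \<forall>y\<in>I. x \<otimes>\<^bsub>R\<^esub> y \<in> J}"

definition BL_ring :: "('a, 'b) ring_scheme \<Rightarrow> bool" where
  "BL_ring R \<longleftrightarrow> cring R \<and>
     BL_algebra {I. ideal I R} (\<inter>) (set_add R) (ideal_prod R) (\<lambda>I J. ideal_res R I J)
       {\<zero>\<^bsub>R\<^esub>} (carrier R)"

end

theory Submission
  imports Defs "HOL-Algebra.IntRing" "HOL-Computational_Algebra.Group_Closure"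
begin

text \<open>Every ideal of \<open>\<int>\<close> is principal. For \<open>I = d\<int>\<close>, \<open>J = e\<int>\<close> and
  \<open>g = gcd d e\<close>, the residuum \<open>I \<rightarrow> J\<close> contains \<open>e/g\<close> and \<open>J \<rightarrow> I\<close> contains
  \<open>d/g\<close>; these are coprime, which gives prelinearity, and
  \<open>I \<inter> J = lcm d e \<int> = d (e/g) \<int> \<subseteq> I (I \<rightarrow> J)\<close> gives divisibility. In the form \<open>I \<inter> J \<subseteq> I (I \<rightarrow> J)\<close> and \<open>1 \<in> (I \<rightarrow> J) + (J \<rightarrow> I)\<close> both
  axioms pass to surjective images \<open>h : R \<rightarrow> S\<close>: pull the ideals of \<open>S\<close> back to \<open>R\<close>,
  apply the axiom there and push forward, since \<open>h\<close> maps products into products and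
  residua into residua. Finally, by the Chinese remainder theorem,
  \<open>n \<mapsto> (n mod k\<^sub>1, \<dots>, n mod k\<^sub>r)\<close> maps \<open>\<int>\<close> onto the product.\<close>

section \<open>BL-rings through their ideals\<close>

text \<open>The halves of divisibility and prelinearity that can fail: the reverse inclusions
  hold in every commutative ring.\<close>

definition ideals_divisible :: "('a, 'b) ring_scheme \<Rightarrow> bool" where
  "ideals_divisible R \<longleftrightarrow>
     (\<forall>I J. ideal I R \<longrightarrow> ideal J R \<longrightarrow> I \<inter> J \<subseteq> ideal_prod R I (ideal_res R I J))"

definition ideals_prelinear :: "('a, 'b) ring_scheme \<Rightarrow> bool" where
  "ideals_prelinear R \<longleftrightarrow>
     (\<forall>I J. ideal I R \<longrightarrow> ideal J R \<longrightarrow>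
        \<one>\<^bsub>R\<^esub> \<in> set_add R (ideal_res R I J) (ideal_res R J I))"

lemma (in cring) ideal_ideal_res:
  assumes I: "I \<subseteq> carrier R" and J: "ideal J R"
  shows "ideal (ideal_res R I J) R"
proof (rule idealI)
  interpret J: ideal J R by (fact J)
  show "subgroup (ideal_res R I J) (add_monoid R)"
  proof (rule add.subgroupI)
    show "ideal_res R I J \<noteq> {}"
      using I unfolding ideal_res_def by (auto intro!: exI[of _ \<zero>])
  next
    fix x assume "x \<in> ideal_res R I J"
    then show "\<ominus> x \<in> ideal_res R I J"
      using I unfolding ideal_res_def by (auto simp: l_minus subset_iff)
  next
    fix x y assume "x \<in> ideal_res R I J" "y \<in> ideal_res R I J"
    then show "x \<oplus> y \<in> ideal_res R I J"
      using I unfolding ideal_res_def by (auto simp: l_distr subset_iff)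
  qed (auto simp: ideal_res_def)
next
  fix a x assume a: "a \<in> ideal_res R I J" and x: "x \<in> carrier R"
  then show "x \<otimes> a \<in> ideal_res R I J"
    using I J unfolding ideal_res_def by (auto simp: m_assoc subset_iff ideal.I_l_closed)
  then show "a \<otimes> x \<in> ideal_res R I J"
    using a x unfolding ideal_res_def by (simp add: m_comm)
qed (rule ring_axioms)

lemma (in ring) ideal_prod_subset_iff:
  assumes "I \<subseteq> carrier R" and "ideal K R"
  shows "ideal_prod R I J \<subseteq> K \<longleftrightarrow> I \<subseteq> ideal_res R J K"
proof
  assume "ideal_prod R I J \<subseteq> K"
  then show "I \<subseteq> ideal_res R J K"
    using assms(1) ideal_prod.prod[of _ I _ J R] unfolding ideal_res_def by blast
next
  assume res: "I \<subseteq> ideal_res R J K"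
  show "ideal_prod R I J \<subseteq> K"
  proof
    fix s assume "s \<in> ideal_prod R I J"
    then show "s \<in> K"
    proof (induct s rule: ideal_prod.induct)
      case (prod i j)
      then show ?case using res unfolding ideal_res_def by blast
    next
      case (sum s1 s2)
      then show ?case using assms(2) by (simp add: additive_subgroup.a_closed ideal.axioms(1))
    qed
  qed
qed

lemma (in ring) set_add_ideals_upper:
  assumes "ideal I R" "ideal J R"
  shows "I \<subseteq> set_add R I J" and "J \<subseteq> set_add R I J"
proof -
  have "I \<union> J \<subseteq> carrier R"
    using assms by (blast intro: ideal.Icarr)
  then show "I \<subseteq> set_add R I J" and "J \<subseteq> set_add R I J"
    using genideal_self[of "I \<union> J"] union_genideal[OF assms] by auto
qed

lemma (in ring) set_add_ideals_absorb:
  assumes "ideal I R" "ideal J R" "J \<subseteq> I"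
  shows "set_add R I J = I"
  using assms genideal_minimal[of I "I \<union> J"] set_add_ideals_upper(1)[OF assms(1,2)]
  by (auto simp: union_genideal)

lemma (in cring) residuated_lattice_ideals:
  "residuated_lattice {I. ideal I R} (\<inter>) (set_add R) (ideal_prod R) (ideal_res R) {\<zero>} (carrier R)"
proof -
  have sub: "I \<subseteq> carrier R" if "ideal I R" for I
    using that by (blast intro: ideal.Icarr)
  have join_comm: "set_add R I J = set_add R J I" if "ideal I R" "ideal J R" for I J
    using that sub by (simp add: set_add_comm)
  have join_assoc: "set_add R (set_add R I J) K = set_add R I (set_add R J K)"
    if "ideal I R" "ideal J R" "ideal K R" for I J K
    using that sub add.set_mult_assoc unfolding set_add_def by blast
  show ?thesis
    unfolding residuated_lattice_def
    by (intro conjI ballI)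
      (simp_all add: zeroideal oneideal i_intersect add_ideals ideal_prod_is_ideal ideal_ideal_res sub
        ideal_prod_one set_add_ideals_absorb set_add_ideals_upper(1)[THEN Int_absorb2]
        inf.absorb_iff1[symmetric] ideal_prod_subset_iff additive_subgroup.zero_closed ideal.axioms(1)
        Int_assoc join_assoc ideal_prod_assoc,
       (rule Int_commute join_comm ideal_prod_commute; assumption)+)
qed

lemma (in cring) BL_ring_iff: "BL_ring R \<longleftrightarrow> ideals_divisible R \<and> ideals_prelinear R"
proof -
  have res: "ideal (ideal_res R I J) R" if "ideal I R" "ideal J R" for I J
    using that by (blast intro: ideal_ideal_res ideal.Icarr)
  have prelinear: "set_add R (ideal_res R I J) (ideal_res R J I) = carrier R \<longleftrightarrow>
      \<one> \<in> set_add R (ideal_res R I J) (ideal_res R J I)" if "ideal I R" "ideal J R" for I J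
    using that res ideal.one_imp_carrier[OF add_ideals] by (metis one_closed)
  have divisible: "ideal_prod R I (ideal_res R I J) = I \<inter> J \<longleftrightarrow>
      I \<inter> J \<subseteq> ideal_prod R I (ideal_res R I J)" if "ideal I R" "ideal J R" for I J
  proof -
    have "ideal_prod R I (ideal_res R I J) \<subseteq> I"
      using ideal_prod_inter[OF that(1) res[OF that]] by blast
    moreover have "ideal_prod R I (ideal_res R I J) \<subseteq> J"
      using ideal_prod_commute[OF that(1) res[OF that]]
        ideal_prod_subset_iff[of "ideal_res R I J" J I] that(2)
      unfolding ideal_res_def by blast
    ultimately show ?thesis by blast
  qed
  show ?thesis
    using residuated_lattice_ideals prelinear divisible
    unfolding BL_ring_def BL_algebra_def ideals_divisible_def ideals_prelinear_def
    by (auto simp: is_cring)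
qed

section \<open>Surjective images of BL-rings\<close>

lemma (in ring_hom_ring) cring_surj_image:
  assumes "cring R" and surj: "h ` carrier R = carrier S"
  shows "cring S"
proof -
  have "x \<otimes>\<^bsub>S\<^esub> y = y \<otimes>\<^bsub>S\<^esub> x" if "x \<in> carrier S" "y \<in> carrier S" for x y
  proof -
    have "x \<in> h ` carrier R" "y \<in> h ` carrier R"
      using that surj by simp_all
    then obtain a b where ab: "a \<in> carrier R" "b \<in> carrier R" and "x = h a" "y = h b"
      by blast
    then have "x \<otimes>\<^bsub>S\<^esub> y = h (a \<otimes> b)" and "y \<otimes>\<^bsub>S\<^esub> x = h (b \<otimes> a)"
      by simp_all
    then show ?thesis
      using comm_monoid.m_comm[OF cring.axioms(2)[OF assms(1)] ab] by simp
  qed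
  then show ?thesis
    by (intro cring.intro comm_monoid.intro comm_monoid_axioms.intro S.ring_axioms S.monoid_axioms)
qed

lemma (in ring_hom_ring) image_vimage_surj:
  assumes "h ` carrier R = carrier S" and "K \<subseteq> carrier S"
  shows "h ` {x \<in> carrier R. h x \<in> K} = K"
proof
  show "K \<subseteq> h ` {x \<in> carrier R. h x \<in> K}"
  proof
    fix k assume "k \<in> K"
    moreover have "k \<in> h ` carrier R"
      using assms \<open>k \<in> K\<close> by blast
    ultimately show "k \<in> h ` {x \<in> carrier R. h x \<in> K}"
      by blast
  qed
qed blast

lemma (in ring_hom_ring) ideal_prod_image_subset:
  assumes "I \<subseteq> carrier R" "J \<subseteq> carrier R" "h ` I \<subseteq> K" "h ` J \<subseteq> L"
  shows "h ` ideal_prod R I J \<subseteq> ideal_prod S K L"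
proof -
  have "s \<in> carrier R \<and> h s \<in> ideal_prod S K L" if "s \<in> ideal_prod R I J" for s
    using that
  proof (induct s rule: ideal_prod.induct)
    case (prod i j)
    then have "i \<in> carrier R" "j \<in> carrier R"
      using assms by auto
    then show ?case
      using prod assms by (auto intro!: ideal_prod.prod)
  next
    case (sum s1 s2)
    then show ?case
      by (auto intro: ideal_prod.sum)
  qed
  then show ?thesis by blast
qed

lemma (in ring_hom_ring) ideal_res_vimage_image_subset:
  assumes surj: "h ` carrier R = carrier S" and K: "K \<subseteq> carrier S"
  shows "h ` ideal_res R {x \<in> carrier R. h x \<in> K} {x \<in> carrier R. h x \<in> L} \<subseteq> ideal_res S K L"
proof
  fix y assume "y \<in> h ` ideal_res R {x \<in> carrier R. h x \<in> K} {x \<in> carrier R. h x \<in> L}"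
  then obtain r where r: "r \<in> ideal_res R {x \<in> carrier R. h x \<in> K} {x \<in> carrier R. h x \<in> L}"
    and y: "y = h r"
    by blast
  have r_carrier: "r \<in> carrier R"
    using r unfolding ideal_res_def by blast
  have "h r \<otimes>\<^bsub>S\<^esub> k \<in> L" if "k \<in> K" for k
  proof -
    have "k \<in> h ` {x \<in> carrier R. h x \<in> K}"
      using that image_vimage_surj[OF surj K] by simp
    then obtain k' where k': "k' \<in> carrier R" "h k' \<in> K" "k = h k'"
      by blast
    then have "h (r \<otimes> k') \<in> L"
      using r unfolding ideal_res_def by blast
    then show ?thesis
      using k' r_carrier by simp
  qed
  moreover have "h r \<in> carrier S"
    using r_carrier by simp
  ultimately show "y \<in> ideal_res S K L"
    unfolding ideal_res_def y by blast
qed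


lemma (in ring_hom_ring) ideals_divisible_surj_image:
  assumes surj: "h ` carrier R = carrier S" and "ideals_divisible R"
  shows "ideals_divisible S"
  unfolding ideals_divisible_def
proof (intro allI impI subsetI)
  fix K L z assume K: "ideal K S" and L: "ideal L S" and z: "z \<in> K \<inter> L"
  define K' where "K' = {x \<in> carrier R. h x \<in> K}"
  define L' where "L' = {x \<in> carrier R. h x \<in> L}"
  have K_carrier: "K \<subseteq> carrier S"
    using K by (blast intro: ideal.Icarr)
  have "z \<in> h ` carrier R"
    using z K_carrier surj by blast
  then obtain x where "x \<in> carrier R" "z = h x"
    by blast
  then have "x \<in> K' \<inter> L'"
    using z unfolding K'_def L'_def by blast
  then have "x \<in> ideal_prod R K' (ideal_res R K' L')"
    using assms(2) ideal_vimage[OF K] ideal_vimage[OF L]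
    unfolding ideals_divisible_def K'_def L'_def by blast
  moreover have "h ` ideal_prod R K' (ideal_res R K' L') \<subseteq> ideal_prod S K (ideal_res S K L)"
    using ideal_res_vimage_image_subset[OF surj K_carrier] image_vimage_surj[OF surj K_carrier]
    unfolding K'_def L'_def
    by (intro ideal_prod_image_subset) (auto simp: ideal_res_def)
  ultimately show "z \<in> ideal_prod S K (ideal_res S K L)"
    using \<open>z = h x\<close> by blast
qed

lemma (in ring_hom_ring) ideals_prelinear_surj_image:
  assumes surj: "h ` carrier R = carrier S" and "ideals_prelinear R"
  shows "ideals_prelinear S"
  unfolding ideals_prelinear_def
proof (intro allI impI)
  fix K L assume K: "ideal K S" and L: "ideal L S"
  have K_carrier: "K \<subseteq> carrier S" and L_carrier: "L \<subseteq> carrier S"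
    using K L by (blast intro: ideal.Icarr)+
  define K' where "K' = {x \<in> carrier R. h x \<in> K}"
  define L' where "L' = {x \<in> carrier R. h x \<in> L}"
  have "\<one> \<in> set_add R (ideal_res R K' L') (ideal_res R L' K')"
    using assms(2) ideal_vimage[OF K] ideal_vimage[OF L]
    unfolding ideals_prelinear_def K'_def L'_def by blast
  then obtain u v where u: "u \<in> ideal_res R K' L'" and v: "v \<in> ideal_res R L' K'"
    and one: "\<one> = u \<oplus> v"
    unfolding set_add_def' by blast
  have "h u \<in> ideal_res S K L" "h v \<in> ideal_res S L K"
    using u v ideal_res_vimage_image_subset[OF surj K_carrier]
      ideal_res_vimage_image_subset[OF surj L_carrier]
    unfolding K'_def L'_def by blast+
  moreover have "\<one>\<^bsub>S\<^esub> = h u \<oplus>\<^bsub>S\<^esub> h v"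
    using u v one unfolding ideal_res_def
    by (metis (no_types, lifting) hom_add hom_one mem_Collect_eq)
  ultimately show "\<one>\<^bsub>S\<^esub> \<in> set_add S (ideal_res S K L) (ideal_res S L K)"
    unfolding set_add_def' by blast
qed

lemma (in ring_hom_ring) BL_ring_surj_image:
  assumes "BL_ring R" and surj: "h ` carrier R = carrier S"
  shows "BL_ring S"
proof -
  have "cring R"
    using assms(1) unfolding BL_ring_def by blast
  then have "cring S" and "ideals_divisible R" and "ideals_prelinear R"
    using assms cring_surj_image cring.BL_ring_iff by blast+
  then show ?thesis
    using cring.BL_ring_iff ideals_divisible_surj_image[OF surj]
      ideals_prelinear_surj_image[OF surj]
    by blast
qed

section \<open>The ring of integers\<close>

lemma int_ideal_eq_multiples:
  assumes "ideal I \<Z>"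
  shows "I = {x. Gcd I dvd x}"
proof -
  interpret I: ideal I \<Z> by (fact assms)
  have "group_closure I \<subseteq> I"
  proof
    fix x assume "x \<in> group_closure I"
    then show "x \<in> I"
    proof induct
      case (base s)
      then show ?case
        using I.zero_closed by auto
    next
      case (diff s t)
      then have "s \<oplus>\<^bsub>\<Z>\<^esub> (\<ominus>\<^bsub>\<Z>\<^esub> t) \<in> I"
        by (intro I.a_closed I.a_inv_closed)
      then show ?case
        by (simp add: int_a_inv_eq)
    qed
  qed
  then have "I = group_closure I"
    by (auto intro: group_closure.base)
  also have "\<dots> = range (times (Gcd I))"
    by (rule group_closure_eq)
  also have "\<dots> = {x. Gcd I dvd x}"
    by (auto simp: dvd_def)
  finally show ?thesis .
qed

lemma int_ideal_res_multiples:
  fixes d e :: int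
  assumes "I = {x. d dvd x}" and "J = {x. e dvd x}"
  shows "c * (e div gcd d e) \<in> ideal_res \<Z> I J"
proof -
  have key: "e div gcd d e * d = e * (d div gcd d e)"
    by (simp add: div_mult_swap mult.commute)
  have "e dvd c * (e div gcd d e) * y" if "d dvd y" for y
  proof -
    obtain t where "y = d * t"
      using \<open>d dvd y\<close> ..
    then have "c * (e div gcd d e) * y = (e div gcd d e * d) * (c * t)"
      by (simp add: ac_simps)
    also have "\<dots> = e * (d div gcd d e * (c * t))"
      unfolding key by (simp add: mult.assoc)
    finally show ?thesis
      by (rule dvdI)
  qed
  then show ?thesis
    unfolding ideal_res_def assms by simp
qed

lemma int_ideals_prelinear: "ideals_prelinear \<Z>"
  unfolding ideals_prelinear_def
proof (intro allI impI)
  fix I J assume I_ideal: "ideal I \<Z>" and J_ideal: "ideal J \<Z>"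
  obtain d e :: int where I: "I = {x. d dvd x}" and J: "J = {x. e dvd x}"
    using int_ideal_eq_multiples[OF I_ideal] int_ideal_eq_multiples[OF J_ideal] by blast
  obtain u v where u: "u \<in> ideal_res \<Z> I J" and v: "v \<in> ideal_res \<Z> J I" and "u + v = 1"
  proof (cases "d = 0 \<and> e = 0")
    case True
    then have "1 \<in> ideal_res \<Z> I J" "0 \<in> ideal_res \<Z> J I"
      unfolding I J ideal_res_def by auto
    then show ?thesis
      using that by fastforce
  next
    case False
    then have "coprime (d div gcd d e) (e div gcd d e)"
      by (simp add: div_gcd_coprime)
    then obtain a b where "a * (e div gcd d e) + b * (d div gcd d e) = 1"
      by (metis bezout_int coprime_iff_gcd_eq_1 gcd.commute)
    moreover have "a * (e div gcd d e) \<in> ideal_res \<Z> I J"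
      by (rule int_ideal_res_multiples[OF I J])
    moreover have "b * (d div gcd d e) \<in> ideal_res \<Z> J I"
      using int_ideal_res_multiples[OF J I] by (simp add: gcd.commute)
    ultimately show ?thesis
      using that by blast
  qed
  then show "\<one>\<^bsub>\<Z>\<^esub> \<in> set_add \<Z> (ideal_res \<Z> I J) (ideal_res \<Z> J I)"
    unfolding set_add_def' by force
qed

lemma int_ideals_divisible: "ideals_divisible \<Z>"
  unfolding ideals_divisible_def
proof (intro allI impI subsetI)
  fix I J x assume I_ideal: "ideal I \<Z>" and J_ideal: "ideal J \<Z>" and x: "x \<in> I \<inter> J"
  obtain d e :: int where I: "I = {x. d dvd x}" and J: "J = {x. e dvd x}"
    using int_ideal_eq_multiples[OF I_ideal] int_ideal_eq_multiples[OF J_ideal] by blast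
  have "lcm d e dvd x"
    using x unfolding I J by simp
  moreover have "lcm d e = \<bar>d * (e div gcd d e)\<bar>"
    by (simp add: lcm_gcd div_mult_swap)
  ultimately have "d * (e div gcd d e) dvd x"
    by simp
  then obtain k where k: "x = d * (e div gcd d e * k)"
    by (auto simp: dvd_def mult.assoc)
  have "e div gcd d e * k \<in> ideal_res \<Z> I J"
    using int_ideal_res_multiples[OF I J, of k] by (simp add: mult.commute)
  moreover have "d \<in> I"
    unfolding I by simp
  ultimately show "x \<in> ideal_prod \<Z> I (ideal_res \<Z> I J)"
    unfolding k using ideal_prod.prod[of d I _ "ideal_res \<Z> I J" \<Z>] by simp
qed

theorem int_BL_ring: "BL_ring \<Z>"
  using cring.BL_ring_iff[OF int_is_cring] int_ideals_divisible int_ideals_prelinear by blast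

section \<open>Products of residue rings\<close>

lemma RDirProd_ring_hom_pair:
  assumes "f \<in> ring_hom R S" and "g \<in> ring_hom R T"
  shows "(\<lambda>x. (f x, g x)) \<in> ring_hom R (RDirProd S T)"
  using assms unfolding ring_hom_def RDirProd_def DirProd_def by (auto simp: monoid.defs)

lemma nil_ring_hom: "(\<lambda>x. []) \<in> ring_hom R nil_ring"
  unfolding ring_hom_def by (auto simp: monoid.defs)

lemma int_mod_ring_hom:
  assumes "m > 1"
  shows "(\<lambda>n. n mod m) \<in> ring_hom \<Z> (residue_ring m)"
  using assms unfolding ring_hom_def residue_ring_def by (auto simp: mod_add_eq mod_mult_eq)

lemma ring_RDirProd_list_residue_rings:
  assumes "\<forall>m\<in>set ms. m > 1"
  shows "ring (RDirProd_list (map residue_ring ms))"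
proof (rule RDirProd_list_is_ring)
  fix i assume "i < length (map residue_ring ms)"
  then have "residues (ms ! i)"
    using assms by (simp add: residues_def)
  then show "ring (map residue_ring ms ! i)"
    using \<open>i < length (map residue_ring ms)\<close> by (simp add: residues.cring cring.axioms(1))
qed

lemma int_mod_list_ring_hom:
  assumes "\<forall>m\<in>set ms. m > 1"
  shows "(\<lambda>n. map (\<lambda>m. n mod m) ms) \<in> ring_hom \<Z> (RDirProd_list (map residue_ring ms))"
  using assms
proof (induct ms)
  case Nil
  then show ?case
    using nil_ring_hom by simp
next
  case (Cons m ms)
  have "(\<lambda>(a, as). a # as) \<circ> (\<lambda>n. (n mod m, map (\<lambda>m. n mod m) ms))
      \<in> ring_hom \<Z> (RDirProd_list (residue_ring m # map residue_ring ms))"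
    using Cons
    by (intro ring_hom_trans[OF _ RDirProd_list_hom1] RDirProd_ring_hom_pair int_mod_ring_hom) auto
  then show ?case
    by (simp add: comp_def)
qed

lemma int_mod_list_surj:
  assumes "\<forall>m\<in>set ms. m > 1" and "sorted_wrt coprime ms"
  shows "(\<lambda>n. map (\<lambda>m. n mod m) ms) ` carrier \<Z> = carrier (RDirProd_list (map residue_ring ms))"
proof
  show "(\<lambda>n. map (\<lambda>m. n mod m) ms) ` carrier \<Z> \<subseteq> carrier (RDirProd_list (map residue_ring ms))"
    using ring_hom_closed[OF int_mod_list_ring_hom[OF assms(1)]] by blast
  show "carrier (RDirProd_list (map residue_ring ms)) \<subseteq> (\<lambda>n. map (\<lambda>m. n mod m) ms) ` carrier \<Z>"
    using assms
  proof (induct ms)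
    case Nil
    then show ?case by simp
  next
    case (Cons m ms)
    show ?case
    proof
      fix z assume "z \<in> carrier (RDirProd_list (map residue_ring (m # ms)))"
      then obtain x xs where z: "z = x # xs" and x: "x \<in> {0..m - 1}"
        and xs: "xs \<in> carrier (RDirProd_list (map residue_ring ms))"
        using RDirProd_list_carrier[of "residue_ring m" "map residue_ring ms"]
        by (auto simp: residue_ring_def)
      obtain n0 where n0: "xs = map (\<lambda>m. n0 mod m) ms"
        using Cons xs by auto
      have "coprime m (prod_list ms)"
        using Cons.prems(2) by (auto intro: prod_list_coprime_right)
      then obtain n where n: "[n = x] (mod m)" "[n = n0] (mod prod_list ms)"
        using binary_chinese_remainder_int by blast
      have "n mod m = x"
        using n(1) x unfolding cong_def by auto
      moreover have "n mod m' = n0 mod m'" if "m' \<in> set ms" for m'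
        using cong_dvd_modulus[OF n(2) prod_list_dvd[OF that]] unfolding cong_def .
      ultimately have "z = map (\<lambda>m. n mod m) (m # ms)"
        using z n0 by simp
      then show "z \<in> (\<lambda>n. map (\<lambda>m. n mod m) (m # ms)) ` carrier \<Z>"
        by blast
    qed
  qed
qed


lemma sorted_wrt_coprime_prime_powers:
  assumes "distinct (map fst ps)" and "\<forall>(p, a) \<in> set ps. prime p"
  shows "sorted_wrt coprime (map (\<lambda>(p, a). int (p ^ a)) ps)"
  using assms
proof (induct ps)
  case Nil
  then show ?case by simp
next
  case (Cons pa ps)
  obtain p a where pa: "pa = (p, a)"
    by fastforce
  have "coprime (int (p ^ a)) (int (q ^ b))" if "(q, b) \<in> set ps" for q b
  proof -
    have "p \<notin> fst ` set ps"
      using Cons.prems(1) pa by simp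
    then have "q \<noteq> p"
      using that by force
    moreover have "prime p" "prime q"
      using Cons.prems(2) pa that by auto
    ultimately have "coprime p q"
      by (simp add: primes_coprime)
    then show ?thesis
      by simp
  qed
  then show ?case
    using Cons pa by auto
qed

lemma BL_ring_RDirProd_list_residue_rings:
  assumes "\<forall>m\<in>set ms. m > 1" and "sorted_wrt coprime ms"
  shows "BL_ring (RDirProd_list (map residue_ring ms))"
proof -
  interpret ring_hom_ring \<Z> "RDirProd_list (map residue_ring ms)" "\<lambda>n. map (\<lambda>m. n mod m) ms"
    using assms(1)
    by (intro ring_hom_ringI2 int.ring_axioms ring_RDirProd_list_residue_rings int_mod_list_ring_hom)
  show ?thesis
    using BL_ring_surj_image[OF int_BL_ring] int_mod_list_surj[OF assms] by simp
qed

lemma prime_powers_gt_1: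
  assumes "\<forall>(p, a) \<in> set ps. prime p \<and> a > 0"
  shows "\<forall>m\<in>set (map (\<lambda>(p, a). int (p ^ a)) ps). m > 1"
proof -
  have "1 < int (p ^ a)" if "(p, a) \<in> set ps" for p a
  proof -
    have "prime p" "a > 0"
      using assms that by auto
    then have "1 < p ^ a"
      by (intro one_less_power prime_gt_1_nat)
    then show ?thesis
      by (metis of_nat_1 of_nat_less_iff)
  qed
  then show ?thesis
    by auto
qed

theorem corollary3p9:
  fixes ps :: "(nat \<times> nat) list"
  assumes "ps \<noteq> []"
    and "distinct (map fst ps)"
    and "\<forall>(p, a) \<in> set ps. prime p \<and> a > 0"
  shows "BL_ring (RDirProd_list (map (\<lambda>(p, a). residue_ring (int (p ^ a))) ps))"
proof -
  let ?ms = "map (\<lambda>(p, a). int (p ^ a)) ps"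
  have "\<forall>m\<in>set ?ms. m > 1"
    using assms(3) by (rule prime_powers_gt_1)
  moreover have "sorted_wrt coprime ?ms"
    using assms(3) by (intro sorted_wrt_coprime_prime_powers[OF assms(2)]) auto
  ultimately have "BL_ring (RDirProd_list (map residue_ring ?ms))"
    by (rule BL_ring_RDirProd_list_residue_rings)
  moreover have "map (\<lambda>(p, a). residue_ring (int (p ^ a))) ps = map residue_ring ?ms"
    by auto
  ultimately show ?thesis
    by (simp only:)
qed

end
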